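(* Let $m\ge 2$ and consider actions $0,1,\dots,m$ and a random state $S\in\{A,A^c\}$ with $P(S=A)=P(S=A^c)=1/2$. In state $A$, action $0$ has deterministic cost $0$ and each action $j\ge1$ has cost distributed $\mathcal{N}(1,1)$; in state $A^c$, action $0$ has deterministic cost $1$ and each action $j\ge 1$ has cost distributed $\mathcal{N}(0,1)$. Given $S$, the training data consist of $m$ independent cost observations of each action (all independent), and $\hat{\mu}(j)$ denotes the empirical average cost of action $j$. The predicted cost minimization (PCM) rule selects $\arg\min_j\hat{\mu}(j)$; the uncertainty penalized (UP) rule with parameter $\lambda$ selects $\arg\min_j\hat{\mu}(j)+\lambda\sqrt{\sigma_j^2\ln m/m}$, where $\sigma_0^2=0$ and $\sigma_j^2=1$ for $j\ge1$. The regret of a rule is the true expected cost (in the realized state) of the selected action minus the minimal true expected cost in that state, and $\mathbb{E}R^{PCM},\mathbb{E}R^{UP}$ denote expected regrets over the training data and the state. If $\lambda\ge\sqrt{2}$, then $\mathbb{E}R^{UP}/\mathbb{E}R^{PCM}\to0$ as $m\to\infty$, i.e. $\mathbb{E}R^{UP}=o(\mathbb{E}R^{PCM})$.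
   Context: Ties in the argmin occur with probability zero and may be broken arbitrarily. The true expected cost of action $j\ge1$ is $1$ in state $A$ and $0$ in state $A^c$; that of action $0$ is $0$ in state $A$ and $1$ in state $A^c$. *)

theory Defs
  imports "HOL-Probability.Probability"
begin

datatype state = StA | StAc

definition true_cost :: "state \<Rightarrow> nat \<Rightarrow> real" where
  "true_cost s j = (case s of StA \<Rightarrow> (if j = 0 then 0 else 1)
                            | StAc \<Rightarrow> (if j = 0 then 1 else 0))"

definition gauss_mean :: "state \<Rightarrow> real" where
  "gauss_mean s = (case s of StA \<Rightarrow> 1 | StAc \<Rightarrow> 0)"

text \<open>Training data given the state: observation X (j,i) is the i-th cost observation
  (i = 1..m) of action j (j = 1..m), all independent N(gauss_mean s, 1).
  Action 0 has deterministic cost, so its observations are not random.\<close>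
definition data_dist :: "nat \<Rightarrow> state \<Rightarrow> (nat \<times> nat \<Rightarrow> real) measure" where
  "data_dist m s = PiM ({1..m} \<times> {1..m}) (\<lambda>_. density lborel (normal_density (gauss_mean s) 1))"

definition emp_mean :: "nat \<Rightarrow> state \<Rightarrow> (nat \<times> nat \<Rightarrow> real) \<Rightarrow> nat \<Rightarrow> real" where
  "emp_mean m s X j = (if j = 0 then true_cost s 0 else (\<Sum>i\<in>{1..m}. X (j, i)) / real m)"

definition sigma2 :: "nat \<Rightarrow> real" where
  "sigma2 j = (if j = 0 then 0 else 1)"

text \<open>Argmin over actions 0..m; ties (a null event) broken towards the smallest index.\<close>
definition argmin_act :: "nat \<Rightarrow> (nat \<Rightarrow> real) \<Rightarrow> nat" where
  "argmin_act m f = (LEAST j. j \<le> m \<and> (\<forall>k\<le>m. f j \<le> f k))"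

definition sel_PCM :: "nat \<Rightarrow> state \<Rightarrow> (nat \<times> nat \<Rightarrow> real) \<Rightarrow> nat" where
  "sel_PCM m s X = argmin_act m (emp_mean m s X)"

definition sel_UP :: "real \<Rightarrow> nat \<Rightarrow> state \<Rightarrow> (nat \<times> nat \<Rightarrow> real) \<Rightarrow> nat" where
  "sel_UP lam m s X =
     argmin_act m (\<lambda>j. emp_mean m s X j + lam * sqrt (sigma2 j * ln (real m) / real m))"

definition regret :: "nat \<Rightarrow> state \<Rightarrow> nat \<Rightarrow> real" where
  "regret m s j = true_cost s j - Min (true_cost s ` {0..m})"

definition exp_regret :: "nat \<Rightarrow> (state \<Rightarrow> (nat \<times> nat \<Rightarrow> real) \<Rightarrow> nat) \<Rightarrow> real" where
  "exp_regret m sel =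
     (1/2) * (\<integral>X. regret m StA (sel StA X) \<partial>data_dist m StA)
   + (1/2) * (\<integral>X. regret m StAc (sel StAc X) \<partial>data_dist m StAc)"

definition ER_PCM :: "nat \<Rightarrow> real" where
  "ER_PCM m = exp_regret m (sel_PCM m)"

definition ER_UP :: "real \<Rightarrow> nat \<Rightarrow> real" where
  "ER_UP lam m = exp_regret m (sel_UP lam m)"

end

theory Submission
  imports Defs "HOL-Real_Asymp.Real_Asymp"
begin

text \<open>Write \<open>\<Phi>(c) = P(N(0,1) < c)\<close>. As the true costs are 0 or 1, the regret of an argmin rule
  is the probability that it misjudges whether action 0 is optimal. In state \<open>A\<close>, PCM errs
  whenever the sample mean of action 1 is negative, so the expected PCM regret is at least
  \<open>\<Phi>(-\<surd>m)/2\<close>. UP errs in state \<open>A\<close> only if some action \<open>j \<ge> 1\<close> has sample mean below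
  \<open>-\<lambda>\<surd>(ln m/m)\<close>, which by a union bound has probability at most \<open>m \<Phi>(-\<surd>m - \<lambda>\<surd>(ln m))\<close>; in
  state \<open>A\<^sup>c\<close> it errs only if actions 1 and 2 both have index at least 1, a deviation of order
  \<open>\<surd>m\<close> of the standardised sum of their \<open>2m\<close> observations. The Gaussian shift inequality
  \<open>\<Phi>(-(a + d)) \<le> exp(-a d) \<Phi>(-a)\<close> compares both bounds with \<open>\<Phi>(-\<surd>m)\<close>, so the ratio of expected
  regrets is at most \<open>m exp(-\<surd>(m ln m)) + exp(-c m)\<close>.\<close>

lemma distr_PiM_component:
  fixes N :: "real measure"
  assumes "finite K" "p \<in> K" "prob_space N" "sets N = sets borel"
  shows "distr (PiM K (\<lambda>_. N)) borel (\<lambda>X. X p) = N"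
proof -
  interpret product_prob_space "\<lambda>_. N" K
    by (simp add: assms(3) product_prob_space_def product_sigma_finite_def
        prob_space_imp_sigma_finite product_prob_space_axioms_def)
  have "distr (PiM K (\<lambda>_. N)) borel (\<lambda>X. X p) = distr (PiM K (\<lambda>_. N)) N (\<lambda>X. X p)"
    unfolding distr_def using assms(4) sets_eq_imp_space_eq[OF assms(4)] by simp
  also have "\<dots> = N" using assms(2) by (rule PiM_component)
  finally show ?thesis .
qed

lemma measurable_PiM_component_borel:
  fixes N :: "real measure"
  assumes "p \<in> K" "sets N = sets borel"
  shows "(\<lambda>X. X p) \<in> borel_measurable (PiM K (\<lambda>_. N))"
  using measurable_component_singleton[OF assms(1), of "\<lambda>_. N"]
  by (simp add: measurable_cong_sets[OF refl assms(2)])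

lemma indep_vars_PiM_components:
  fixes N :: "real measure"
  assumes K: "finite K" and JK: "J \<subseteq> K" and J: "J \<noteq> {}"
    and N: "prob_space N" and sN: "sets N = sets borel"
  shows "prob_space.indep_vars (PiM K (\<lambda>_. N)) (\<lambda>_. borel) (\<lambda>p X. X p) J"
proof -
  interpret P: product_prob_space "\<lambda>_. N" K
    by (simp add: N product_prob_space_def product_sigma_finite_def prob_space_imp_sigma_finite
        product_prob_space_axioms_def)
  have ps: "prob_space (PiM K (\<lambda>_. N))" by (rule prob_space_PiM) (simp add: N)
  have rv: "(\<lambda>X. X p) \<in> borel_measurable (PiM K (\<lambda>_. N))" if "p \<in> J" for p
    using that JK by (intro measurable_PiM_component_borel[OF _ sN]) auto
  have components: "distr (PiM K (\<lambda>_. N)) borel (\<lambda>X. X p) = N" if "p \<in> J" for p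
    using that JK by (intro distr_PiM_component[OF K _ N sN]) auto
  have "distr (PiM K (\<lambda>_. N)) (PiM J (\<lambda>_. borel)) (\<lambda>X. \<lambda>p\<in>J. X p) =
        distr (PiM K (\<lambda>_. N)) (PiM J (\<lambda>_. N)) (\<lambda>X. restrict X J)"
    unfolding distr_def
    using sets_PiM_cong[of J J "\<lambda>_. N" "\<lambda>_. borel"] sN
      sets_eq_imp_space_eq[OF sets_PiM_cong[of J J "\<lambda>_. N" "\<lambda>_. borel"]]
    by (simp add: restrict_def)
  also have "\<dots> = PiM J (\<lambda>_. N)"
    using P.distr_restrict[OF JK K] by simp
  also have "\<dots> = PiM J (\<lambda>p. distr (PiM K (\<lambda>_. N)) borel (\<lambda>X. X p))"
    by (intro PiM_cong) (auto simp: components)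
  finally show ?thesis
    using prob_space.indep_vars_iff_distr_eq_PiM'[OF ps J rv] by simp
qed

lemma distributed_PiM_sum_normal_standardized:
  fixes K J :: "'i set" and \<mu> :: real
  assumes K: "finite K" and JK: "J \<subseteq> K" and J: "J \<noteq> {}"
  shows "distributed (PiM K (\<lambda>_. density lborel (normal_density \<mu> 1))) lborel
     (\<lambda>X. ((\<Sum>p\<in>J. X p) - real (card J) * \<mu>) / sqrt (real (card J))) std_normal_density"
proof -
  define N where "N = density lborel (normal_density \<mu> 1)"
  have N: "prob_space N" unfolding N_def by (rule prob_space_normal_density) simp
  have sN: "sets N = sets borel" unfolding N_def by simp
  have ps: "prob_space (PiM K (\<lambda>_. N))" by (rule prob_space_PiM) (simp add: N)
  have fJ: "finite J" using K JK finite_subset by blast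
  have comp: "distributed (PiM K (\<lambda>_. N)) lborel (\<lambda>X. X p) (normal_density \<mu> 1)" if "p \<in> J" for p
  proof -
    have "distr (PiM K (\<lambda>_. N)) lborel (\<lambda>X. X p) = distr (PiM K (\<lambda>_. N)) borel (\<lambda>X. X p)"
      unfolding distr_def by simp
    also have "\<dots> = N" using that JK by (intro distr_PiM_component[OF K _ N sN]) auto
    finally have "distr (PiM K (\<lambda>_. N)) lborel (\<lambda>X. X p) = N" .
    moreover have "(\<lambda>X. X p) \<in> borel_measurable (PiM K (\<lambda>_. N))"
      using that JK by (intro measurable_PiM_component_borel[OF _ sN]) auto
    ultimately show ?thesis unfolding distributed_def by (simp add: N_def)
  qed
  have "distributed (PiM K (\<lambda>_. N)) lborel (\<lambda>X. \<Sum>p\<in>J. X p)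
          (normal_density (\<Sum>p\<in>J. \<mu>) (sqrt (\<Sum>p\<in>J. 1\<^sup>2)))"
    by (rule prob_space.sum_indep_normal[OF ps fJ J indep_vars_PiM_components[OF K JK J N sN],
        of "\<lambda>_. 1"]) (auto intro: comp)
  then have "distributed (PiM K (\<lambda>_. N)) lborel (\<lambda>X. \<Sum>p\<in>J. X p)
          (normal_density (real (card J) * \<mu>) (sqrt (real (card J))))" by simp
  moreover have pos: "0 < sqrt (real (card J))" using fJ J by (simp add: card_gt_0_iff)
  ultimately show ?thesis
    using iffD1[OF prob_space.normal_standard_normal_convert[OF ps pos]] unfolding N_def by fast
qed

definition std_normal_lt :: "real \<Rightarrow> real" where
  "std_normal_lt c = measure std_normal_distribution {..<c}"

lemma std_normal_lt_nonneg: "0 \<le> std_normal_lt c"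
  unfolding std_normal_lt_def by simp

lemma measure_less_std_normal:
  assumes "distributed M lborel Z std_normal_density"
  shows "measure M {x\<in>space M. Z x < c} = std_normal_lt c"
proof -
  have Z: "Z \<in> borel_measurable M" using assms by (simp add: distributed_def)
  have "measure M {x\<in>space M. Z x < c} = measure M (Z -` {..<c} \<inter> space M)"
    by (intro arg_cong[where f="measure M"]) auto
  also have "\<dots> = measure (distr M lborel Z) {..<c}"
    using Z by (subst measure_distr) auto
  finally show ?thesis using assms by (simp add: distributed_def std_normal_lt_def)
qed

lemma measure_greater_std_normal:
  assumes "prob_space M" "distributed M lborel Z std_normal_density"
  shows "measure M {x\<in>space M. Z x > c} = std_normal_lt (- c)"
proof -
  have "distributed M lborel (\<lambda>x. 0 + (-1) * Z x) (normal_density (0 + (-1) * 0) (\<bar>-1\<bar> * 1))"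
    by (rule prob_space.normal_density_affine[OF assms]) auto
  then have "distributed M lborel (\<lambda>x. - Z x) std_normal_density" by simp
  from measure_less_std_normal[OF this, of "- c"] show ?thesis
    by (simp add: neg_less_iff_less)
qed

text \<open>On \<open>x < -a\<close> the shifted density satisfies
  \<open>\<phi>(x - d) = exp (x d - d\<^sup>2/2) \<phi>(x) \<le> exp (-a d) \<phi>(x)\<close>.\<close>
lemma std_normal_lt_shift_le:
  assumes a: "0 \<le> a" and d: "0 \<le> d"
  shows "std_normal_lt (- (a + d)) \<le> exp (- (a * d)) * std_normal_lt (- a)"
proof -
  let ?\<phi> = "\<lambda>x. ennreal (std_normal_density x)"
  have emeasure_eq: "emeasure std_normal_distribution {..<c} = (\<integral>\<^sup>+ x. ?\<phi> x * indicator {..<c} x \<partial>lborel)" for c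
    by (subst emeasure_density) auto
  have density_le: "?\<phi> (x - d) * indicator {..<- a} x
      \<le> ennreal (exp (- (a * d))) * (?\<phi> x * indicator {..<- a} x)" for x
  proof (cases "x < - a")
    case True
    have "std_normal_density (x - d) = exp (x * d - d\<^sup>2 / 2) * std_normal_density x"
      by (simp add: std_normal_density_def mult_exp_exp power2_eq_square algebra_simps
          add_divide_distrib[symmetric] diff_divide_distrib[symmetric])
    also have "\<dots> \<le> exp (- (a * d)) * std_normal_density x"
    proof (intro mult_right_mono)
      have "x * d \<le> - a * d" using True d by (intro mult_right_mono) auto
      moreover have "0 \<le> d\<^sup>2 / 2" by simp
      ultimately show "exp (x * d - d\<^sup>2 / 2) \<le> exp (- (a * d))" by (subst exp_le_cancel_iff) linarith
    qed simp
    finally show ?thesis using True by (simp add: ennreal_mult[symmetric])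
  qed simp
  have "(\<integral>\<^sup>+ x. ?\<phi> x * indicator {..<- (a + d)} x \<partial>lborel)
      = (\<integral>\<^sup>+ x. ?\<phi> (-d + 1 * x) * indicator {..<- (a + d)} (-d + 1 * x) \<partial>lborel)"
    using nn_integral_real_affine[of "\<lambda>x. ?\<phi> x * indicator {..<- (a + d)} x" 1 "-d"] by simp
  also have "\<dots> = (\<integral>\<^sup>+ x. ?\<phi> (x - d) * indicator {..<- a} x \<partial>lborel)"
    by (intro nn_integral_cong) (auto simp: indicator_def)
  also have "\<dots> \<le> (\<integral>\<^sup>+ x. ennreal (exp (- (a * d))) * (?\<phi> x * indicator {..<- a} x) \<partial>lborel)"
    by (intro nn_integral_mono density_le)
  also have "\<dots> = ennreal (exp (- (a * d))) * (\<integral>\<^sup>+ x. ?\<phi> x * indicator {..<- a} x \<partial>lborel)"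
    by (rule nn_integral_cmult) auto
  finally have "emeasure std_normal_distribution {..<- (a + d)}
      \<le> ennreal (exp (- (a * d))) * emeasure std_normal_distribution {..<- a}"
    by (simp add: emeasure_eq)
  then have "ennreal (std_normal_lt (- (a + d))) \<le> ennreal (exp (- (a * d)) * std_normal_lt (- a))"
    unfolding std_normal_lt_def
    using prob_space.finite_measure[OF prob_space_normal_density]
    by (simp add: finite_measure.emeasure_eq_measure ennreal_mult)
  then show ?thesis using std_normal_lt_nonneg by (simp add: ennreal_le_iff)
qed

lemma mult_sqrt_divide:
  assumes "0 \<le> x"
  shows "x * sqrt (y / x) = sqrt x * sqrt y"
proof -
  have "x * sqrt (y / x) = (x / sqrt x) * sqrt y" by (simp add: real_sqrt_divide)
  then show ?thesis using real_div_sqrt[OF assms] by simp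
qed

lemma argmin_act_eq_0_iff: "argmin_act m f = 0 \<longleftrightarrow> (\<forall>k\<le>m. f 0 \<le> f k)"
proof
  assume "\<forall>k\<le>m. f 0 \<le> f k"
  then show "argmin_act m f = 0" unfolding argmin_act_def by (intro Least_eq_0) auto
next
  assume argmin: "argmin_act m f = 0"
  have "Min (f ` {..m}) \<in> f ` {..m}" by (rule Min_in) auto
  then obtain j where "j \<le> m" "f j = Min (f ` {..m})" by (metis atMost_iff imageE)
  then have "j \<le> m \<and> (\<forall>k\<le>m. f j \<le> f k)" by auto
  from LeastI[of "\<lambda>j. j \<le> m \<and> (\<forall>k\<le>m. f j \<le> f k)", OF this]
  show "\<forall>k\<le>m. f 0 \<le> f k" using argmin unfolding argmin_act_def by simp
qed

lemma regret_eq: "1 \<le> m \<Longrightarrow> regret m s j = (if (s = StA) = (j = 0) then 0 else 1)"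
proof -
  assume m: "1 \<le> m"
  have "Min (true_cost s ` {0..m}) = 0"
  proof (rule Min_eqI)
    show "0 \<in> true_cost s ` {0..m}"
    proof (cases s)
      case StA then show ?thesis by (intro rev_image_eqI[of 0]) (auto simp: true_cost_def)
    next
      case StAc then show ?thesis using m by (intro rev_image_eqI[of 1]) (auto simp: true_cost_def)
    qed
  qed (auto simp: true_cost_def split: state.splits)
  then show ?thesis by (cases s) (auto simp: regret_def true_cost_def)
qed

lemma prob_space_data_dist: "prob_space (data_dist m s)"
  unfolding data_dist_def by (rule prob_space_PiM) (rule prob_space_normal_density, simp)

lemma emp_mean_measurable:
  "k \<le> m \<Longrightarrow> (\<lambda>X. emp_mean m s X k) \<in> borel_measurable (data_dist m s)"
proof (cases "k = 0")
  case False
  assume "k \<le> m"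
  then have "(\<lambda>X. X (k, i)) \<in> borel_measurable (data_dist m s)" if "i \<in> {1..m}" for i
    using that False unfolding data_dist_def by (intro measurable_PiM_component_borel) auto
  then show ?thesis using False unfolding emp_mean_def by measurable
qed (simp add: emp_mean_def)

text \<open>Under data \<open>X\<close> a rule minimising \<open>g X\<close> incurs regret exactly on this event: action 0
  is a minimiser although the state is \<open>A\<^sup>c\<close>, or is not one although the state is \<open>A\<close>.\<close>
definition misselection :: "nat \<Rightarrow> state \<Rightarrow> ((nat \<times> nat \<Rightarrow> real) \<Rightarrow> nat \<Rightarrow> real) \<Rightarrow> (nat \<times> nat \<Rightarrow> real) set"
  where "misselection m s g = {X \<in> space (data_dist m s). (s = StA) \<noteq> (\<forall>k\<le>m. g X 0 \<le> g X k)}"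

lemma misselection_sets:
  assumes "\<And>k. k \<le> m \<Longrightarrow> (\<lambda>X. g X k) \<in> borel_measurable (data_dist m s)"
  shows "misselection m s g \<in> sets (data_dist m s)"
proof -
  let ?M = "data_dist m s"
  have "{X \<in> space ?M. \<forall>k\<in>{..m}. g X 0 \<le> g X k} \<in> sets ?M"
  proof (rule sets.sets_Collect_finite_All)
    fix k assume "k \<in> {..m}"
    then have [measurable]: "(\<lambda>X. g X k) \<in> borel_measurable ?M" "(\<lambda>X. g X 0) \<in> borel_measurable ?M"
      using assms by auto
    show "{X \<in> space ?M. g X 0 \<le> g X k} \<in> sets ?M" by measurable
  qed simp
  moreover have "misselection m s g = (if s = StA then space ?M - {X \<in> space ?M. \<forall>k\<in>{..m}. g X 0 \<le> g X k}
      else {X \<in> space ?M. \<forall>k\<in>{..m}. g X 0 \<le> g X k})"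
    unfolding misselection_def by auto
  ultimately show ?thesis by auto
qed

lemma integral_regret_argmin:
  assumes "1 \<le> m"
  shows "(\<integral>X. regret m s (argmin_act m (g X)) \<partial>data_dist m s) = measure (data_dist m s) (misselection m s g)"
proof -
  let ?M = "data_dist m s"
  have "(\<integral>X. regret m s (argmin_act m (g X)) \<partial>?M) = (\<integral>X. indicator (misselection m s g) X \<partial>?M)"
    using regret_eq[OF assms]
    by (intro Bochner_Integration.integral_cong) (auto simp: argmin_act_eq_0_iff misselection_def)
  also have "\<dots> = measure ?M (misselection m s g)"
    by (simp add: misselection_def Int_absorb2)
  finally show ?thesis .
qed

lemma integral_regret_nonneg: "1 \<le> m \<Longrightarrow> 0 \<le> (\<integral>X. regret m s (f X) \<partial>M)"
  by (intro integral_nonneg_AE AE_I2) (simp add: regret_eq)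

lemma distributed_data_dist_rows_sum:
  assumes R: "R \<subseteq> {1..m}" "R \<noteq> {}"
  shows "distributed (data_dist m s) lborel
     (\<lambda>X. ((\<Sum>j\<in>R. \<Sum>i\<in>{1..m}. X (j, i)) - real (card R * m) * gauss_mean s) / sqrt (real (card R * m)))
     std_normal_density"
proof -
  have "m \<noteq> 0" using R by auto
  then have "distributed (data_dist m s) lborel
     (\<lambda>X. ((\<Sum>p\<in>R \<times> {1..m}. X p) - real (card (R \<times> {1..m})) * gauss_mean s)
        / sqrt (real (card (R \<times> {1..m})))) std_normal_density"
    unfolding data_dist_def using R by (intro distributed_PiM_sum_normal_standardized) auto
  moreover have "card (R \<times> {1..m}) = card R * m" by (simp add: card_cartesian_product)
  ultimately show ?thesis by (simp add: sum.cartesian_product)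
qed

lemma UP_index_eq:
  assumes "j \<noteq> 0" "0 < m"
  shows "emp_mean m s X j + lam * sqrt (sigma2 j * ln (real m) / real m)
    = ((\<Sum>i\<in>{1..m}. X (j, i)) + lam * (sqrt (real m) * sqrt (ln (real m)))) / real m"
proof -
  have "sqrt (ln (real m) / real m) = sqrt (real m) * sqrt (ln (real m)) / real m"
    using mult_sqrt_divide[of "real m" "ln (real m)"] assms(2) by (simp add: field_simps)
  then show ?thesis using assms by (simp add: emp_mean_def sigma2_def add_divide_distrib)
qed

lemma integral_regret_PCM_StA_ge:
  assumes m: "1 \<le> m"
  shows "std_normal_lt (- sqrt (real m)) \<le> (\<integral>X. regret m StA (sel_PCM m StA X) \<partial>data_dist m StA)"
proof -
  let ?M = "data_dist m StA"
  let ?Z = "\<lambda>X. ((\<Sum>i\<in>{1..m}. X (1, i)) - real m * gauss_mean StA) / sqrt (real m)"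
  have Z: "distributed ?M lborel ?Z std_normal_density"
    using distributed_data_dist_rows_sum[of "{1}" m StA] m by simp
  have "{X \<in> space ?M. ?Z X < - sqrt (real m)} \<subseteq> misselection m StA (emp_mean m StA)"
  proof safe
    fix X assume "X \<in> space ?M" and "?Z X < - sqrt (real m)"
    then have "(\<Sum>i\<in>{1..m}. X (1, i)) < 0" using m by (simp add: gauss_mean_def divide_less_eq)
    then have "emp_mean m StA X 1 < emp_mean m StA X 0"
      using m by (simp add: emp_mean_def true_cost_def divide_neg_pos)
    then show "X \<in> misselection m StA (emp_mean m StA)"
      using m \<open>X \<in> space ?M\<close> unfolding misselection_def by force
  qed
  then have "measure ?M {X \<in> space ?M. ?Z X < - sqrt (real m)} \<le> measure ?M (misselection m StA (emp_mean m StA))"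
    by (intro finite_measure.finite_measure_mono prob_space.finite_measure prob_space_data_dist
        misselection_sets emp_mean_measurable)
  then show ?thesis
    unfolding measure_less_std_normal[OF Z] sel_PCM_def integral_regret_argmin[OF m] .
qed

lemma integral_regret_UP_StA_le:
  assumes m: "1 \<le> m"
  shows "(\<integral>X. regret m StA (sel_UP lam m StA X) \<partial>data_dist m StA)
     \<le> real m * std_normal_lt (- (sqrt (real m) + lam * sqrt (ln (real m))))"
proof -
  let ?M = "data_dist m StA"
  let ?g = "\<lambda>X j. emp_mean m StA X j + lam * sqrt (sigma2 j * ln (real m) / real m)"
  let ?c = "- (sqrt (real m) + lam * sqrt (ln (real m)))"
  let ?Z = "\<lambda>j X. ((\<Sum>i\<in>{1..m}. X (j, i)) - real m * gauss_mean StA) / sqrt (real m)"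
  let ?A = "\<lambda>j. {X \<in> space ?M. ?Z j X < ?c}"
  have Z: "distributed ?M lborel (?Z j) std_normal_density" if "j \<in> {1..m}" for j
    using distributed_data_dist_rows_sum[of "{j}" m StA] that by simp
  have A: "?A j \<in> sets ?M" if "j \<in> {1..m}" for j
  proof -
    have [measurable]: "?Z j \<in> borel_measurable ?M" using Z[OF that] by (simp add: distributed_def)
    show ?thesis by measurable
  qed
  have "misselection m StA ?g \<subseteq> (\<Union>j\<in>{1..m}. ?A j)"
  proof
    fix X assume "X \<in> misselection m StA ?g"
    then obtain k where X: "X \<in> space ?M" and k: "k \<le> m" and lt: "?g X k < ?g X 0"
      unfolding misselection_def by (auto simp: not_le)
    have k0: "k \<noteq> 0"
    proof
      assume "k = 0"
      with lt show False by simp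
    qed
    have "?g X 0 = 0" by (simp add: emp_mean_def true_cost_def sigma2_def)
    then have "((\<Sum>i\<in>{1..m}. X (k, i)) + lam * (sqrt (real m) * sqrt (ln (real m)))) / real m < 0"
      using lt UP_index_eq[OF k0, of m StA X lam] m by simp
    then have "(\<Sum>i\<in>{1..m}. X (k, i)) < - (lam * (sqrt (real m) * sqrt (ln (real m))))"
      using m by (simp add: divide_less_0_iff)
    then have "(\<Sum>i\<in>{1..m}. X (k, i)) - real m * gauss_mean StA < ?c * sqrt (real m)"
      by (simp add: gauss_mean_def algebra_simps)
    then have "?Z k X < ?c"
      using m by (simp only: pos_divide_less_eq real_sqrt_gt_0_iff of_nat_0_less_iff)
    then show "X \<in> (\<Union>j\<in>{1..m}. ?A j)" using X k k0 by auto
  qed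
  moreover have "(\<Union>j\<in>{1..m}. ?A j) \<in> sets ?M" using A by blast
  ultimately have "measure ?M (misselection m StA ?g) \<le> measure ?M (\<Union>j\<in>{1..m}. ?A j)"
    by (intro finite_measure.finite_measure_mono prob_space.finite_measure prob_space_data_dist)
  also have "\<dots> \<le> (\<Sum>j\<in>{1..m}. measure ?M (?A j))"
    using A by (intro finite_measure.finite_measure_subadditive_finite prob_space.finite_measure
        prob_space_data_dist) blast+
  also have "\<dots> = (\<Sum>j\<in>{1..m}. std_normal_lt ?c)"
    by (rule sum.cong[OF refl]) (rule measure_less_std_normal[OF Z])
  also have "\<dots> = real m * std_normal_lt ?c" by simp
  finally show ?thesis
    unfolding sel_UP_def integral_regret_argmin[OF m] .
qed

text \<open>In state \<open>A\<^sup>c\<close> action 0 can only be chosen if the indices of actions 1 and 2 both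
  exceed 1, which forces the sum of their two rows to be large; the slack \<open>- 1\<close> turns the
  resulting non-strict bound into a strict one.\<close>
lemma integral_regret_UP_StAc_le:
  assumes m: "2 \<le> m"
  shows "(\<integral>X. regret m StAc (sel_UP lam m StAc X) \<partial>data_dist m StAc)
     \<le> std_normal_lt (- (sqrt (2 * real m) - sqrt 2 * lam * sqrt (ln (real m)) - 1))"
proof -
  let ?M = "data_dist m StAc"
  let ?g = "\<lambda>X j. emp_mean m StAc X j + lam * sqrt (sigma2 j * ln (real m) / real m)"
  let ?u = "sqrt (2 * real m) - sqrt 2 * lam * sqrt (ln (real m))"
  let ?W = "\<lambda>X. ((\<Sum>j\<in>{1, 2}. \<Sum>i\<in>{1..m}. X (j, i)) - real (2 * m) * gauss_mean StAc)
    / sqrt (real (2 * m))"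
  have m1: "1 \<le> m" using m by simp
  have W: "distributed ?M lborel ?W std_normal_density"
    using distributed_data_dist_rows_sum[of "{1, 2}" m StAc] m by simp
  have [measurable]: "?W \<in> borel_measurable ?M" using W by (simp add: distributed_def)
  have "misselection m StAc ?g \<subseteq> {X \<in> space ?M. ?W X > ?u - 1}"
  proof
    fix X assume "X \<in> misselection m StAc ?g"
    then have X: "X \<in> space ?M" and all: "\<forall>k\<le>m. ?g X 0 \<le> ?g X k"
      unfolding misselection_def by auto
    have "?g X 0 = 1" by (simp add: emp_mean_def true_cost_def sigma2_def)
    then have index_ge: "1 \<le> ?g X j" if "j \<in> {1, 2}" for j using all that m by auto
    have "1 \<le> ((\<Sum>i\<in>{1..m}. X (j, i)) + lam * (sqrt (real m) * sqrt (ln (real m)))) / real m"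
      if "j \<in> {1, 2}" for j
    proof -
      have "j \<noteq> 0" "0 < m" using that m by auto
      then show ?thesis using index_ge[OF that] UP_index_eq by (rule_tac ord_le_eq_trans) auto
    qed
    then have "real m \<le> (\<Sum>i\<in>{1..m}. X (j, i)) + lam * (sqrt (real m) * sqrt (ln (real m)))"
      if "j \<in> {1, 2}" for j
      using that m by (simp add: le_divide_eq)
    from this[of 1] this[of 2]
    have "2 * real m - 2 * lam * (sqrt (real m) * sqrt (ln (real m))) \<le> (\<Sum>j\<in>{1, 2}. \<Sum>i\<in>{1..m}. X (j, i))"
      by simp
    moreover have "sqrt 2 * sqrt (2 * real m) = 2 * sqrt (real m)" by (simp add: real_sqrt_mult)
    then have "?u * sqrt (2 * real m) = 2 * real m - 2 * lam * (sqrt (real m) * sqrt (ln (real m)))"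
      by (simp add: algebra_simps)
    ultimately have "?u * sqrt (2 * real m) \<le> (\<Sum>j\<in>{1, 2}. \<Sum>i\<in>{1..m}. X (j, i))" by simp
    then have "?u \<le> ?W X" using m by (simp add: gauss_mean_def le_divide_eq)
    then show "X \<in> {X \<in> space ?M. ?W X > ?u - 1}" using X by simp
  qed
  then have "measure ?M (misselection m StAc ?g) \<le> measure ?M {X \<in> space ?M. ?W X > ?u - 1}"
    by (intro finite_measure.finite_measure_mono prob_space.finite_measure prob_space_data_dist)
      measurable
  also have "\<dots> = std_normal_lt (- (?u - 1))"
    by (rule measure_greater_std_normal[OF prob_space_data_dist W])
  finally show ?thesis unfolding sel_UP_def integral_regret_argmin[OF m1] by simp
qed

lemma ER_PCM_ge:
  assumes "1 \<le> m"
  shows "std_normal_lt (- sqrt (real m)) / 2 \<le> ER_PCM m"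
  using integral_regret_PCM_StA_ge[OF assms]
    integral_regret_nonneg[OF assms, of "data_dist m StAc" StAc "sel_PCM m StAc"]
  unfolding ER_PCM_def exp_regret_def by linarith

lemma ER_UP_nonneg: "1 \<le> m \<Longrightarrow> 0 \<le> ER_UP lam m"
  unfolding ER_UP_def exp_regret_def by (simp add: integral_regret_nonneg)

definition UP_gap :: "real \<Rightarrow> nat \<Rightarrow> real" where
  "UP_gap lam m = sqrt (2 * real m) - sqrt 2 * lam * sqrt (ln (real m)) - 1 - sqrt (real m)"

definition regret_ratio_bound :: "real \<Rightarrow> nat \<Rightarrow> real" where
  "regret_ratio_bound lam m =
     real m * exp (- (sqrt (real m) * sqrt (ln (real m)))) + exp (- (sqrt (real m) * UP_gap lam m))"

lemma ER_UP_le: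
  assumes m: "2 \<le> m" and lam: "1 \<le> lam" and gap: "0 \<le> UP_gap lam m"
  shows "ER_UP lam m \<le> regret_ratio_bound lam m * std_normal_lt (- sqrt (real m)) / 2"
proof -
  define a where "a = sqrt (real m)"
  define L where "L = sqrt (ln (real m))"
  have a: "0 \<le> a" and L: "0 \<le> L" using m by (simp_all add: a_def L_def)
  have G: "0 \<le> std_normal_lt (- a)" by (rule std_normal_lt_nonneg)
  have "(\<integral>X. regret m StA (sel_UP lam m StA X) \<partial>data_dist m StA) \<le> real m * std_normal_lt (- (a + lam * L))"
    unfolding a_def L_def using m by (intro integral_regret_UP_StA_le) simp
  also have "\<dots> \<le> real m * (exp (- (a * (lam * L))) * std_normal_lt (- a))"
    using a L lam by (intro mult_left_mono std_normal_lt_shift_le) simp_all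
  also have "\<dots> \<le> real m * (exp (- (a * L)) * std_normal_lt (- a))"
  proof -
    have "L \<le> lam * L" using L lam by (simp add: mult_le_cancel_right1)
    then have "a * L \<le> a * (lam * L)" using a by (rule mult_left_mono)
    then show ?thesis using G by (intro mult_left_mono mult_right_mono) simp_all
  qed
  finally have StA: "(\<integral>X. regret m StA (sel_UP lam m StA X) \<partial>data_dist m StA)
      \<le> real m * exp (- (a * L)) * std_normal_lt (- a)" by simp
  have "(\<integral>X. regret m StAc (sel_UP lam m StAc X) \<partial>data_dist m StAc)
      \<le> std_normal_lt (- (sqrt (2 * real m) - sqrt 2 * lam * L - 1))"
    unfolding L_def by (rule integral_regret_UP_StAc_le[OF m])
  also have "\<dots> = std_normal_lt (- (a + UP_gap lam m))"
    by (rule arg_cong[where f = std_normal_lt]) (simp add: a_def L_def UP_gap_def)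
  also have "\<dots> \<le> exp (- (a * UP_gap lam m)) * std_normal_lt (- a)"
    by (rule std_normal_lt_shift_le[OF a gap])
  finally show ?thesis using StA
    unfolding ER_UP_def exp_regret_def regret_ratio_bound_def a_def L_def by (simp add: algebra_simps)
qed

lemma divide_le_of_le_mult:
  fixes u p b g :: real
  assumes "0 \<le> u" "u \<le> b * g" "g \<le> p" "0 \<le> b" "0 \<le> g"
  shows "u / p \<le> b"
proof (cases "g = 0")
  case False
  then have "u \<le> b * p" using assms by (meson mult_left_mono order_trans)
  then show ?thesis using assms False by (simp add: divide_le_eq)
qed (use assms in simp)

lemma ER_ratio_nonneg:
  assumes "1 \<le> m"
  shows "0 \<le> ER_UP lam m / ER_PCM m"
proof -
  have "0 \<le> ER_PCM m" using ER_PCM_ge[OF assms] std_normal_lt_nonneg[of "- sqrt (real m)"] by linarith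
  then show ?thesis by (rule divide_nonneg_nonneg[OF ER_UP_nonneg[OF assms]])
qed

lemma ER_ratio_le:
  assumes "2 \<le> m" "1 \<le> lam" "0 \<le> UP_gap lam m"
  shows "ER_UP lam m / ER_PCM m \<le> regret_ratio_bound lam m"
proof -
  have m: "1 \<le> m" using assms(1) by simp
  have G: "0 \<le> std_normal_lt (- sqrt (real m)) / 2" by (simp add: std_normal_lt_nonneg)
  have B: "0 \<le> regret_ratio_bound lam m" by (simp add: regret_ratio_bound_def)
  have "ER_UP lam m \<le> regret_ratio_bound lam m * (std_normal_lt (- sqrt (real m)) / 2)"
    using ER_UP_le[OF assms] by simp
  from divide_le_of_le_mult[OF ER_UP_nonneg[OF m] this ER_PCM_ge[OF m] B G] show ?thesis .
qed

lemma eventually_UP_gap_nonneg: "eventually (\<lambda>m. 0 \<le> UP_gap lam m) sequentially"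
  unfolding UP_gap_def by real_asymp

lemma regret_ratio_bound_tendsto_0: "(regret_ratio_bound lam \<longlongrightarrow> 0) sequentially"
proof -
  have "((\<lambda>m. real m * exp (- (sqrt (real m) * sqrt (ln (real m))))) \<longlongrightarrow> 0) sequentially"
    by real_asymp
  moreover have "((\<lambda>m. exp (- (sqrt (real m) * UP_gap lam m))) \<longlongrightarrow> 0) sequentially"
    unfolding UP_gap_def by real_asymp
  ultimately show ?thesis unfolding regret_ratio_bound_def by (rule tendsto_add_zero)
qed

theorem mainTheorem5:
  fixes lam :: real
  assumes "lam \<ge> sqrt 2"
  shows "((\<lambda>m::nat. ER_UP lam m / ER_PCM m) \<longlongrightarrow> 0) sequentially"
proof -
  have lam: "1 \<le> lam" using assms real_sqrt_ge_one[of 2] by linarith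
  have lower: "eventually (\<lambda>m. 0 \<le> ER_UP lam m / ER_PCM m) sequentially"
    using eventually_ge_at_top[of 1] by eventually_elim (rule ER_ratio_nonneg)
  have "eventually (\<lambda>m. 2 \<le> m \<and> 0 \<le> UP_gap lam m) sequentially"
    by (intro eventually_conj eventually_ge_at_top eventually_UP_gap_nonneg)
  then have upper: "eventually (\<lambda>m. ER_UP lam m / ER_PCM m \<le> regret_ratio_bound lam m) sequentially"
    by eventually_elim (use ER_ratio_le lam in blast)
  show ?thesis
    by (rule tendsto_sandwich[OF lower upper tendsto_const regret_ratio_bound_tendsto_0])
qed

end
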